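(* Let $\alpha\in(r_2,1)$ and $\mathcal{E}=\{T_{A_2}\leq N^{2\alpha}\}$. Then for every $N\geq1$, $$\sup_{x\in A_1}P^{\overline\mu}_x[\mathcal{E}^c]\leq C_4\exp(-C_5N^{c_6}),\qquad\sup_{x\in A_1}P_x[\mathcal{E}^c]\leq C_4'\exp(-C_5'N^{c_6'}),$$ with positive constants depending on $\alpha$.
   Context: Standing setting. $d\geq3$; $P_x$ is the law of continuous-time simple random walk $(X_t)$ on $\mathbb{Z}^d$ with jump rate 1 started at $x$; $T_K=\inf\{t\geq0:X_t\notin K\}$. $B_r\subseteq\mathbb{R}^d$ open Euclidean ball of radius $r$ at $0$; $B(x,r)=\{y\in\mathbb{Z}^d:|y-x|_\infty\leq r\}$; $x\sim y$ means $|x-y|=1$. $D\subseteq\mathbb{R}^d$ is either the closure of a smooth bounded domain containing $0$ or the closure of an open sup-norm ball containing $0$; $r_D=\sup\{|x|:x\in D\}$; $D^\delta$ its closed $\delta$-neighbourhood. Let $\mathfrak{r}\geq0$ be an integer, $F:[0,\infty)^{B(0,\mathfrak{r})}\to[0,\infty)$ measurable with $F(0)=0$, $F\not\equiv0$, $F$ non-decreasing in each argument, and $F(\ell+\ell')\leq F(\ell)+c_1(\mathbf{1}_{\{\ell'\neq0\}}+\sum_{|x|_\infty\leq\mathfrak{r}}\ell'_x)$; $\vartheta(u)=\mathbb{E}[F((\mathcal{L}^u_y)_{y\in B(0,\mathfrak{r})})]$ with $(\mathcal{L}^u_x)$ the occupation-time field of continuous-time random interlacements at level $u$; $\vartheta_\infty=\lim_{u\to\infty}\vartheta(u)$;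 $\mathcal{I}_D(\mu)=\inf\{\frac{1}{2d}\int|\nabla\psi|^2:\psi\in D^{1,2}(\mathbb{R}^d),\frac{1}{|D|}\int_D\vartheta(\psi^2)\geq\mu\}$. Fix $\nu\in(0,\vartheta_\infty)$, $\delta\in(0,1\wedge(r_D/2))$, an integer $\mathcal{R}>4r_D$, and $\varphi:\mathbb{R}^d\to\mathbb{R}$ with: $\varphi\in C^\infty(\overline{B_{\mathcal{R}}})$, $\mathrm{supp}\,\varphi=\overline{B_{\mathcal{R}}}$, $\varphi>0$ on $B_{\mathcal{R}}$; $\varphi$ harmonic on $B_{\mathcal{R}}\setminus D^\delta$; $\nu(1+\delta)\leq\frac{1}{|D|}\int_D\vartheta(\varphi^2)\leq\nu(1+2\delta)$ and $\mathcal{I}_D(\nu+\delta)\leq\frac{1}{2d}\int|\nabla\varphi|^2\leq\mathcal{I}_D(\nu+2\delta)$. $\varphi_N(x)=\varphi(x/N)$. Fix $\eta\in(0,\mathcal{R}/100)$, $x_0\in(ND^\delta)\cap\mathbb{Z}^d$, reals $0<r_1<\dots<r_5<\frac14$ with $r_1(d-2)+r_5<1$, $r_1<\frac{d-2}{d-1}r_2$, and small $\widetilde\delta>0$; $A_j=B(x_0,\lfloor N^{r_j}\rfloor)$, $1\leq j\leq5$, $A_6=B(x_0,\lfloor\widetilde\delta N/100\rfloor)\subseteq(NB_{\mathcal{R}-\eta})\cap\mathbb{Z}^d$ for all $N$. Let $\varphi_N^{\mathrm{per}}$ be the $(2\lfloor N^{r_5}\rfloor+3)$-periodic extension to $\mathbb{Z}^d$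 of the restriction of $\varphi_N$ to $B(x_0,\lfloor N^{r_5}\rfloor+1)$, and set $\overline\mu_{x,y}=\frac{1}{2d}\varphi_N^{\mathrm{per}}(x)\varphi_N^{\mathrm{per}}(y)$ for $x\sim y$ and $\overline\nu_x=(\varphi_N^{\mathrm{per}})^2(x)$. $P^{\overline\mu}_x$ is the law of the continuous-time Markov chain on $\mathbb{Z}^d$ started at $x$ with generator $g\mapsto\sum_{y\sim x}\frac{\overline\mu_{x,y}}{\overline\nu_x}(g(y)-g(x))$. Constants may depend on $d,\varphi,\delta,\mathcal{R},\eta,(r_j),\widetilde\delta$ but not on $N$ or $x_0$. *)

theory Defs
  imports "HOL-Analysis.Analysis" "HOL-Probability.Probability"
begin

definition rvec :: "int^'d \<Rightarrow> real^'d" where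
  "rvec x = (\<chi> i. real_of_int (x $ i))"

definition nbr :: "int^'d \<Rightarrow> int^'d \<Rightarrow> bool" where
  "nbr x y \<longleftrightarrow> norm (rvec x - rvec y) = 1"

definition zbox :: "int^'d \<Rightarrow> int \<Rightarrow> (int^'d) set" where
  "zbox x r = {y. \<forall>i. \<bar>y $ i - x $ i\<bar> \<le> r}"

fun iter_deriv :: "'a::euclidean_space list \<Rightarrow> ('a \<Rightarrow> real) \<Rightarrow> 'a \<Rightarrow> real" where
  "iter_deriv [] f = f"
| "iter_deriv (v # vs) f = (\<lambda>x. frechet_derivative (iter_deriv vs f) (at x) v)"

definition smooth_on :: "'a::euclidean_space set \<Rightarrow> ('a \<Rightarrow> real) \<Rightarrow> bool" where
  "smooth_on U f \<longleftrightarrow> (\<forall>vs. (\<forall>x\<in>U. iter_deriv vs f differentiable (at x))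
                            \<and> continuous_on U (iter_deriv vs f))"

definition smooth_on_closed :: "'a::euclidean_space set \<Rightarrow> ('a \<Rightarrow> real) \<Rightarrow> bool" where
  "smooth_on_closed K f \<longleftrightarrow> (\<exists>U g. open U \<and> K \<subseteq> U \<and> smooth_on U g \<and> (\<forall>x\<in>K. g x = f x))"

definition harmonic_on :: "'a::euclidean_space set \<Rightarrow> ('a \<Rightarrow> real) \<Rightarrow> bool" where
  "harmonic_on W f \<longleftrightarrow> smooth_on W f \<and> (\<forall>x\<in>W. (\<Sum>i\<in>Basis. iter_deriv [i, i] f x) = 0)"

definition smooth_bounded_domain :: "'a::euclidean_space set \<Rightarrow> bool" where
  "smooth_bounded_domain \<Omega> \<longleftrightarrow> open \<Omega> \<and> connected \<Omega> \<and> bounded \<Omega> \<and> \<Omega> \<noteq> {} \<and>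
     (\<forall>p\<in>frontier \<Omega>. \<exists>U \<psi>. open U \<and> p \<in> U \<and> smooth_on U \<psi> \<and>
         (\<forall>x\<in>U. \<exists>v. frechet_derivative \<psi> (at x) v \<noteq> 0) \<and> \<Omega> \<inter> U = {x\<in>U. \<psi> x < 0})"

definition sup_ball :: "real^'d \<Rightarrow> real \<Rightarrow> (real^'d) set" where
  "sup_ball c \<rho> = {x. \<forall>i. \<bar>x $ i - c $ i\<bar> < \<rho>}"

definition admissible_D :: "(real^'d) set \<Rightarrow> bool" where
  "admissible_D D \<longleftrightarrow>
     (\<exists>\<Omega>. smooth_bounded_domain \<Omega> \<and> 0 \<in> \<Omega> \<and> D = closure \<Omega>) \<or>
     (\<exists>c \<rho>. \<rho> > 0 \<and> 0 \<in> sup_ball c \<rho> \<and> D = closure (sup_ball c \<rho>))"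

definition rD :: "(real^'d) set \<Rightarrow> real" where
  "rD D = Sup (norm ` D)"

definition nbhd :: "(real^'d) set \<Rightarrow> real \<Rightarrow> (real^'d) set" where
  "nbhd D \<delta> = {x. \<exists>y\<in>D. dist x y \<le> \<delta>}"

text \<open>q x y = jump rate from x to a neighbour y.  The chain is X_t = Y_(N_t) with N a Poisson
process of rate Lambda = 1 + sup_x (total rate at x) and Y the discrete chain with kernel below.\<close>

definition total_rate :: "(int^'d \<Rightarrow> int^'d \<Rightarrow> real) \<Rightarrow> int^'d \<Rightarrow> real" where
  "total_rate q x = (\<Sum>y\<in>{y. nbr x y}. q x y)"

definition unif_rate :: "(int^'d \<Rightarrow> int^'d \<Rightarrow> real) \<Rightarrow> real" where
  "unif_rate q = 1 + (SUP x. total_rate q x)"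

definition unif_kernel :: "(int^'d \<Rightarrow> int^'d \<Rightarrow> real) \<Rightarrow> int^'d \<Rightarrow> (int^'d) pmf" where
  "unif_kernel q x = embed_pmf (\<lambda>y. if y = x then 1 - total_rate q x / unif_rate q
                                    else if nbr x y then q x y / unif_rate q else 0)"

fun path_pmf :: "('a \<Rightarrow> 'a pmf) \<Rightarrow> 'a \<Rightarrow> nat \<Rightarrow> 'a list pmf" where
  "path_pmf K x 0 = return_pmf [x]"
| "path_pmf K x (Suc n) = bind_pmf (path_pmf K x n) (\<lambda>p. map_pmf (\<lambda>y. p @ [y]) (K (last p)))"

text \<open>Law of the sequence of visited states of X on [0,t], started at x.\<close>
definition ctmc_path_upto :: "(int^'d \<Rightarrow> int^'d \<Rightarrow> real) \<Rightarrow> int^'d \<Rightarrow> real \<Rightarrow> (int^'d) list pmf" where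
  "ctmc_path_upto q x t =
     bind_pmf (poisson_pmf (unif_rate q * t)) (\<lambda>n. path_pmf (unif_kernel q) x n)"

text \<open>P_x[T_K > t] = P_x[X_s \<in> K for all s in [0,t]].\<close>
definition exit_after :: "(int^'d \<Rightarrow> int^'d \<Rightarrow> real) \<Rightarrow> int^'d \<Rightarrow> (int^'d) set \<Rightarrow> real \<Rightarrow> real" where
  "exit_after q x K t = measure_pmf.prob (ctmc_path_upto q x t) {p. set p \<subseteq> K}"

definition srw_rate :: "int^'d \<Rightarrow> int^'d \<Rightarrow> real" where
  "srw_rate x y = 1 / (2 * real CARD('d))"

text \<open>(2L+3)-periodic extension of phi_N restricted to B(x0, L+1), L = floor(N^r5).\<close>
definition phi_per :: "(real^'d \<Rightarrow> real) \<Rightarrow> nat \<Rightarrow> int^'d \<Rightarrow> real \<Rightarrow> int^'d \<Rightarrow> real" where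
  "phi_per \<phi> N x0 r5 x =
     (let L = \<lfloor>real N powr r5\<rfloor>
      in \<phi> ((1 / real N) *\<^sub>R rvec (\<chi> i. x0 $ i + ((x $ i - x0 $ i + L + 1) mod (2 * L + 3)) - (L + 1))))"

definition mu_bar :: "(real^'d \<Rightarrow> real) \<Rightarrow> nat \<Rightarrow> int^'d \<Rightarrow> real \<Rightarrow> int^'d \<Rightarrow> int^'d \<Rightarrow> real" where
  "mu_bar \<phi> N x0 r5 x y = 1 / (2 * real CARD('d)) * phi_per \<phi> N x0 r5 x * phi_per \<phi> N x0 r5 y"

definition nu_bar :: "(real^'d \<Rightarrow> real) \<Rightarrow> nat \<Rightarrow> int^'d \<Rightarrow> real \<Rightarrow> int^'d \<Rightarrow> real" where
  "nu_bar \<phi> N x0 r5 x = (phi_per \<phi> N x0 r5 x)\<^sup>2"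

text \<open>Jump rates of the chain with generator g \<mapsto> sum_{y~x} mu_xy/nu_x (g y - g x).\<close>
definition tilted_rate :: "(real^'d \<Rightarrow> real) \<Rightarrow> nat \<Rightarrow> int^'d \<Rightarrow> real \<Rightarrow> int^'d \<Rightarrow> int^'d \<Rightarrow> real" where
  "tilted_rate \<phi> N x0 r5 x y = mu_bar \<phi> N x0 r5 x y / nu_bar \<phi> N x0 r5 x"

end

theory Submission
  imports Defs "HOL-Library.Landau_Symbols"
begin

text \<open>Uniformize the chain: with a Poisson number of jumps of mean at least \<open>t\<close>, the exit
  probability is controlled by the probability that the discrete skeleton stays \<open>t/4\<close> steps in
  the box \<open>B(c, L)\<close>.  If in some direction \<open>e\<^sub>i\<close> the rates satisfy \<open>q(x,x+e\<^sub>i) + q(x,x-e\<^sub>i) \<ge> \<rho>\<close>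
  and \<open>4L |q(x,x+e\<^sub>i) - q(x,x-e\<^sub>i)| \<le> q(x,x+e\<^sub>i) + q(x,x-e\<^sub>i)\<close>, then
  \<open>W(y) = (L+1)\<^sup>2 - (y\<^sub>i - c\<^sub>i)\<^sup>2\<close> drops in expectation by a fixed amount per step inside the box.
  Summing this drift bounds the expected time in the box by \<open>O(L\<^sup>2)\<close>, so the skeleton leaves within
  \<open>O(L\<^sup>2)\<close> steps with probability \<open>1/2\<close>, and the Markov property makes the probability of
  staying \<open>n\<close> steps at most \<open>2 exp(-c n / L\<^sup>2)\<close>.  With \<open>L = N\<^sup>r\<^sup>2\<close> and \<open>t = N\<^sup>2\<^sup>\<alpha>\<close> this is
  \<open>exp(-c N\<^sup>2\<^sup>\<alpha>\<^sup>-\<^sup>2\<^sup>r\<^sup>2)\<close>.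

  Both chains have rates \<open>f(y) / (2d f(x))\<close>: the simple random walk with \<open>f = 1\<close>, the tilted
  chain with \<open>f = \<phi>\<^sub>N\<^sup>p\<^sup>e\<^sup>r\<close>.  Since \<open>\<phi>\<close> is smooth and positive, near \<open>x\<^sub>0\<close> this \<open>f\<close> is bounded away
  from \<open>0\<close> and \<open>\<infinity>\<close> with discrete gradient \<open>O(1/N)\<close>, so the drift condition holds as soon as
  \<open>N\<^sup>r\<^sup>2 \<lless> N\<close>; the finitely many small \<open>N\<close> are absorbed into the constant.\<close>

section \<open>Staying probabilities of a discrete chain\<close>

lemma path_pmf_nonempty: "p \<in> set_pmf (path_pmf K x n) \<Longrightarrow> p \<noteq> []"
  by (induction n arbitrary: p) auto

lemma path_pmf_Suc_front:
  "path_pmf K x (Suc n) = bind_pmf (K x) (\<lambda>y. map_pmf (Cons x) (path_pmf K y n))"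
proof (induction n arbitrary: x)
  case 0
  then show ?case by (simp add: map_pmf_def bind_return_pmf)
next
  case (Suc n)
  have extend: "bind_pmf (map_pmf (Cons x) (path_pmf K y n)) (\<lambda>p. map_pmf (\<lambda>z. p @ [z]) (K (last p)))
      = map_pmf (Cons x) (path_pmf K y (Suc n))" for y
  proof -
    have "bind_pmf (map_pmf (Cons x) (path_pmf K y n)) (\<lambda>p. map_pmf (\<lambda>z. p @ [z]) (K (last p)))
        = bind_pmf (path_pmf K y n) (\<lambda>p. map_pmf (\<lambda>z. (x # p) @ [z]) (K (last (x # p))))"
      by (simp add: bind_map_pmf)
    also have "\<dots> = bind_pmf (path_pmf K y n) (\<lambda>p. map_pmf (Cons x) (map_pmf (\<lambda>z. p @ [z]) (K (last p))))"
      by (rule bind_pmf_cong[OF refl]) (auto dest: path_pmf_nonempty simp: pmf.map_comp o_def)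
    finally show ?thesis
      by (simp add: map_bind_pmf)
  qed
  have "path_pmf K x (Suc (Suc n))
      = bind_pmf (K x) (\<lambda>y. bind_pmf (map_pmf (Cons x) (path_pmf K y n)) (\<lambda>p. map_pmf (\<lambda>z. p @ [z]) (K (last p))))"
    by (simp only: path_pmf.simps(2)[of K x "Suc n"] Suc bind_assoc_pmf)
  then show ?case
    by (simp only: extend)
qed

lemma prob_bind_pmf:
  "measure_pmf.prob (bind_pmf M N) X = (\<integral>x. measure_pmf.prob (N x) X \<partial>M)"
proof -
  have "emeasure (bind_pmf M N) X = (\<integral>\<^sup>+x. emeasure (N x) X \<partial>M)"
    by simp
  also have "\<dots> = (\<integral>\<^sup>+x. ennreal (measure_pmf.prob (N x) X) \<partial>M)"
    by (simp add: measure_pmf.emeasure_eq_measure)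
  also have "\<dots> = ennreal (\<integral>x. measure_pmf.prob (N x) X \<partial>M)"
    by (rule nn_integral_eq_integral) (auto intro!: measure_pmf.integrable_const_bound[where B=1])
  finally show ?thesis
    by (simp add: measure_pmf.emeasure_eq_measure)
qed

definition stay_prob :: "('a \<Rightarrow> 'a pmf) \<Rightarrow> 'a set \<Rightarrow> nat \<Rightarrow> 'a \<Rightarrow> real" where
  "stay_prob K A n x = measure_pmf.prob (path_pmf K x n) {p. set p \<subseteq> A}"

lemma stay_prob_0: "stay_prob K A 0 x = (if x \<in> A then 1 else 0)"
  by (simp add: stay_prob_def)

lemma stay_prob_Suc:
  "stay_prob K A (Suc n) x = (if x \<in> A then (\<integral>y. stay_prob K A n y \<partial>K x) else 0)"
  unfolding stay_prob_def path_pmf_Suc_front prob_bind_pmf measure_map_pmf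
  by (auto simp: vimage_def)

lemma stay_prob_nonneg: "0 \<le> stay_prob K A n x"
  and stay_prob_le_1: "stay_prob K A n x \<le> 1"
  by (simp_all add: stay_prob_def)

lemma integrable_stay_prob: "integrable (measure_pmf M) (stay_prob K A n)"
  by (rule measure_pmf.integrable_const_bound[where B=1]) (auto simp: stay_prob_def)

lemma stay_prob_outside: "x \<notin> A \<Longrightarrow> stay_prob K A n x = 0"
  by (cases n) (simp_all add: stay_prob_0 stay_prob_Suc)

lemma stay_prob_Suc_le: "stay_prob K A (Suc n) x \<le> stay_prob K A n x"
proof (induction n arbitrary: x)
  case 0
  show ?case
    by (cases "x \<in> A") (simp_all add: stay_prob_0 stay_prob_outside stay_prob_le_1)
next
  case (Suc n)
  have "(\<integral>y. stay_prob K A (Suc n) y \<partial>K x) \<le> (\<integral>y. stay_prob K A n y \<partial>K x)"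
    by (rule integral_mono) (auto simp: integrable_stay_prob Suc)
  then show ?case
    by (subst (1 2) stay_prob_Suc) simp
qed

lemma stay_prob_antimono: "m \<le> n \<Longrightarrow> stay_prob K A n x \<le> stay_prob K A m x"
  by (induction n rule: dec_induct) (auto intro: order_trans[OF stay_prob_Suc_le])

lemma sum_stay_prob_le:
  fixes W :: "'a \<Rightarrow> real"
  assumes W_nonneg: "\<And>y. 0 \<le> W y" and \<kappa>: "0 < \<kappa>"
    and W_integrable: "\<And>x. integrable (measure_pmf (K x)) W"
    and drift: "\<And>x. x \<in> A \<Longrightarrow> (\<integral>y. W y \<partial>K x) \<le> W x - \<kappa>"
  shows "(\<Sum>k<n. stay_prob K A k x) \<le> W x / \<kappa>"
proof (induction n arbitrary: x)
  case 0
  then show ?case using W_nonneg \<kappa> by simp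
next
  case (Suc n)
  show ?case
  proof (cases "x \<in> A")
    case False
    then show ?thesis using W_nonneg \<kappa> by (simp add: stay_prob_outside)
  next
    case True
    have "(\<Sum>k<Suc n. stay_prob K A k x) = 1 + (\<Sum>k<n. \<integral>y. stay_prob K A k y \<partial>K x)"
      unfolding sum.lessThan_Suc_shift using True by (simp add: stay_prob_0 stay_prob_Suc)
    also have "\<dots> = 1 + (\<integral>y. (\<Sum>k<n. stay_prob K A k y) \<partial>K x)"
      by (simp add: integrable_stay_prob)
    also have "\<dots> \<le> 1 + (\<integral>y. W y / \<kappa> \<partial>K x)"
      by (intro add_left_mono integral_mono) (auto simp: integrable_stay_prob W_integrable Suc)
    also have "\<dots> \<le> 1 + (W x - \<kappa>) / \<kappa>"
      using drift[OF True] \<kappa> by (simp add: divide_right_mono)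
    also have "\<dots> = W x / \<kappa>"
      using \<kappa> by (simp add: field_simps)
    finally show ?thesis .
  qed
qed

lemma stay_prob_le_half:
  fixes W :: "'a \<Rightarrow> real"
  assumes W_nonneg: "\<And>y. 0 \<le> W y" and \<kappa>: "0 < \<kappa>"
    and W_integrable: "\<And>x. integrable (measure_pmf (K x)) W"
    and drift: "\<And>x. x \<in> A \<Longrightarrow> (\<integral>y. W y \<partial>K x) \<le> W x - \<kappa>"
    and W_le: "\<And>x. x \<in> A \<Longrightarrow> W x \<le> B"
    and n: "2 * B \<le> real (Suc n) * \<kappa>"
  shows "stay_prob K A n x \<le> 1/2"
proof (cases "x \<in> A")
  case False
  then show ?thesis by (simp add: stay_prob_outside)
next
  case True
  have "real (Suc n) * stay_prob K A n x = (\<Sum>k<Suc n. stay_prob K A n x)"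
    by simp
  also have "\<dots> \<le> (\<Sum>k<Suc n. stay_prob K A k x)"
    by (intro sum_mono stay_prob_antimono) simp
  also have "\<dots> \<le> W x / \<kappa>"
    by (rule sum_stay_prob_le[OF W_nonneg \<kappa> W_integrable drift])
  also have "\<dots> \<le> B / \<kappa>"
    using W_le[OF True] \<kappa> by (simp add: divide_right_mono)
  also have "\<dots> \<le> real (Suc n) * (1/2)"
    using n \<kappa> by (simp add: field_simps)
  finally show ?thesis
    by (simp only: mult_le_cancel_left_pos of_nat_0_less_iff zero_less_Suc)
qed

lemma stay_prob_add_le:
  assumes "\<And>y. stay_prob K A n y \<le> \<beta>"
  shows "stay_prob K A (m + n) x \<le> \<beta> * stay_prob K A m x"
proof (induction m arbitrary: x)
  case 0
  then show ?case using assms by (simp add: stay_prob_0 stay_prob_outside)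
next
  case (Suc m)
  show ?case
  proof (cases "x \<in> A")
    case False
    then show ?thesis by (simp add: stay_prob_outside)
  next
    case True
    have "stay_prob K A (Suc m + n) x = (\<integral>y. stay_prob K A (m + n) y \<partial>K x)"
      using True by (simp add: stay_prob_Suc)
    also have "\<dots> \<le> (\<integral>y. \<beta> * stay_prob K A m y \<partial>K x)"
      by (rule integral_mono) (auto simp: integrable_stay_prob Suc)
    also have "\<dots> = \<beta> * stay_prob K A (Suc m) x"
      using True by (simp add: stay_prob_Suc)
    finally show ?thesis .
  qed
qed

lemma stay_prob_mult_le_power:
  assumes "\<And>y. stay_prob K A n y \<le> \<beta>"
  shows "stay_prob K A (j * n) x \<le> \<beta> ^ j"
proof (induction j arbitrary: x)
  case 0
  then show ?case by (simp add: stay_prob_0)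
next
  case (Suc j)
  have \<beta>: "0 \<le> \<beta>"
    using assms[of x] stay_prob_nonneg[of K A n x] by linarith
  have "stay_prob K A (j * n + n) x \<le> \<beta> * stay_prob K A (j * n) x"
    by (rule stay_prob_add_le[OF assms])
  also have "\<dots> \<le> \<beta> * \<beta> ^ j"
    by (rule mult_left_mono[OF Suc \<beta>])
  finally show ?case
    by (simp add: add.commute)
qed

lemma half_power_le_exp: "(1/2::real) ^ k \<le> exp (- real k / 2)"
proof -
  have "exp (real k / 2) \<le> 2 ^ k"
    using power_mono[OF exp_half_le2, of k] exp_of_nat_mult[of k "1/2::real"] by simp
  then show ?thesis
    by (simp add: exp_minus power_one_over field_simps)
qed

lemma stay_prob_exp_decay:
  fixes W :: "'a \<Rightarrow> real"
  assumes W_nonneg: "\<And>y. 0 \<le> W y" and \<kappa>: "0 < \<kappa>"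
    and W_integrable: "\<And>x. integrable (measure_pmf (K x)) W"
    and drift: "\<And>x. x \<in> A \<Longrightarrow> (\<integral>y. W y \<partial>K x) \<le> W x - \<kappa>"
    and W_le: "\<And>x. x \<in> A \<Longrightarrow> W x \<le> B"
  shows "stay_prob K A n x \<le> 2 * exp (- real n * \<kappa> / (6 * B))"
proof (cases "x \<in> A")
  case False
  then show ?thesis by (simp add: stay_prob_outside)
next
  case True
  have "0 \<le> (\<integral>y. W y \<partial>K x)"
    by (rule integral_nonneg_AE) (simp add: W_nonneg)
  then have \<kappa>B: "\<kappa> \<le> B"
    using drift[OF True] W_le[OF True] by linarith
  define n0 where "n0 = nat \<lceil>2 * B / \<kappa>\<rceil>"
  have ratio: "1 \<le> B / \<kappa>"
    using \<kappa> \<kappa>B by simp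
  have n0_ge: "2 * B / \<kappa> \<le> real n0"
    unfolding n0_def by linarith
  have n0_le: "real n0 \<le> 3 * B / \<kappa>"
    using ratio unfolding n0_def by (simp add: of_nat_nat) linarith
  have n0_pos: "0 < n0"
    using n0_ge ratio by simp
  have half: "stay_prob K A n0 y \<le> 1/2" for y
    by (rule stay_prob_le_half[OF W_nonneg \<kappa> W_integrable drift W_le])
       (use n0_ge \<kappa> in \<open>auto simp: field_simps\<close>)
  have "real n / real n0 - 1 \<le> real (n div n0)"
  proof -
    have "real (n div n0) = of_int \<lfloor>real n / real n0\<rfloor>"
      by (simp add: floor_divide_of_nat_eq)
    then show ?thesis
      by linarith
  qed
  moreover have "real n * \<kappa> / (3 * B) \<le> real n / real n0"
  proof -
    have "real n * (\<kappa> * real n0) \<le> real n * (3 * B)"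
      using n0_le \<kappa> by (intro mult_left_mono) (simp_all add: field_simps)
    then show ?thesis
      using n0_pos \<kappa> \<kappa>B by (simp add: field_simps)
  qed
  ultimately have exponent: "- real (n div n0) / 2 \<le> 1/2 + (- real n * \<kappa> / (6 * B))"
    by (simp add: field_simps)
  have "stay_prob K A n x \<le> stay_prob K A (n div n0 * n0) x"
    by (rule stay_prob_antimono) simp
  also have "\<dots> \<le> (1/2) ^ (n div n0)"
    by (rule stay_prob_mult_le_power[OF half])
  also have "\<dots> \<le> exp (- real (n div n0) / 2)"
    by (rule half_power_le_exp)
  also have "\<dots> \<le> exp (1/2) * exp (- real n * \<kappa> / (6 * B))"
    using exponent by (simp flip: exp_add)
  also have "\<dots> \<le> 2 * exp (- real n * \<kappa> / (6 * B))"
    using exp_half_le2 by (intro mult_right_mono) auto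
  finally show ?thesis .
qed

section \<open>Uniformization\<close>

lemma poisson_lower_tail:
  fixes \<theta> :: real
  assumes \<theta>: "0 < \<theta>" and M: "4 * real M \<le> \<theta>"
  shows "measure_pmf.prob (poisson_pmf \<theta>) {..<M} \<le> exp (- \<theta> / 3)"
proof -
  have exp_partial_sum: "(\<Sum>n<M. y ^ n / fact n) \<le> exp y" if "0 \<le> y" for y :: real
    using that summable_exp_generic[of y]
    by (auto simp: exp_def divide_inverse ac_simps intro!: sum_le_suminf)
  have "(\<Sum>n<M. \<theta> ^ n / fact n) \<le> (\<Sum>n<M. exp (real M) * ((\<theta> / exp 1) ^ n / fact n))"
  proof (rule sum_mono)
    fix n assume "n \<in> {..<M}"
    then have "exp 1 ^ n \<le> exp (real M)"
      by (simp flip: exp_of_nat_mult)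
    then have "\<theta> ^ n \<le> exp (real M) * (\<theta> / exp 1) ^ n"
      using \<theta> by (simp add: field_simps)
    then show "\<theta> ^ n / fact n \<le> exp (real M) * ((\<theta> / exp 1) ^ n / fact n)"
      by (simp add: divide_right_mono)
  qed
  also have "\<dots> \<le> exp (real M) * exp (\<theta> / exp 1)"
    unfolding sum_distrib_left[symmetric] using \<theta> by (intro mult_left_mono exp_partial_sum) auto
  also have "\<dots> \<le> exp (2/3 * \<theta>)"
  proof -
    have "\<theta> / exp 1 \<le> \<theta> / (5/2)"
      using exp_lower_Taylor_quadratic[of 1] \<theta> by (intro divide_left_mono) auto
    then show ?thesis
      using M by (simp flip: exp_add)
  qed
  finally have "(\<Sum>n<M. \<theta> ^ n / fact n) * exp (- \<theta>) \<le> exp (2/3 * \<theta>) * exp (- \<theta>)"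
    by (intro mult_right_mono) auto
  then show ?thesis
    using \<theta> by (simp add: measure_measure_pmf_finite sum_distrib_right flip: exp_add)
qed

lemma exit_after_le_stay_prob:
  assumes rate: "1 \<le> unif_rate q" and t: "0 < t"
  shows "exit_after q x A t \<le> exp (- t / 3) + stay_prob (unif_kernel q) A (nat \<lfloor>t / 4\<rfloor>) x"
proof -
  define K where "K = unif_kernel q"
  define M where "M = nat \<lfloor>t / 4\<rfloor>"
  define \<theta> where "\<theta> = unif_rate q * t"
  have \<theta>: "0 < \<theta>" "t \<le> \<theta>"
    using rate t by (auto simp: \<theta>_def)
  have "exit_after q x A t = (\<integral>n. stay_prob K A n x \<partial>poisson_pmf \<theta>)"
    unfolding exit_after_def ctmc_path_upto_def prob_bind_pmf stay_prob_def K_def \<theta>_def ..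
  also have "\<dots> \<le> (\<integral>n. indicator {..<M} n + stay_prob K A M x \<partial>poisson_pmf \<theta>)"
  proof (rule integral_mono)
    show "integrable (measure_pmf (poisson_pmf \<theta>)) (\<lambda>n. stay_prob K A n x)"
      by (rule measure_pmf.integrable_const_bound[where B=1]) (auto simp: stay_prob_le_1 stay_prob_nonneg)
    show "integrable (measure_pmf (poisson_pmf \<theta>)) (\<lambda>n. indicator {..<M} n + stay_prob K A M x)"
      by (rule measure_pmf.integrable_const_bound[where B=2])
         (use stay_prob_nonneg[of K A M x] stay_prob_le_1[of K A M x] in \<open>auto simp: indicator_def\<close>)
    show "stay_prob K A n x \<le> indicator {..<M} n + stay_prob K A M x" for n
      using stay_prob_le_1[of K A n x] stay_prob_nonneg[of K A M x] stay_prob_antimono[of M n K A x]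
      by (cases "n < M") auto
  qed
  also have "\<dots> = measure_pmf.prob (poisson_pmf \<theta>) {..<M} + stay_prob K A M x"
    by (subst Bochner_Integration.integral_add) (auto simp: measure_pmf.integrable_const_bound[where B=1])
  also have "measure_pmf.prob (poisson_pmf \<theta>) {..<M} \<le> exp (- \<theta> / 3)"
    by (rule poisson_lower_tail) (use \<theta> t in \<open>auto simp: M_def, linarith\<close>)
  also have "\<dots> \<le> exp (- t / 3)"
    using \<theta> by simp
  finally show ?thesis
    by (simp add: K_def M_def)
qed

lemma rvec_add: "rvec (x + y) = rvec x + rvec y"
  and rvec_diff: "rvec (x - y) = rvec x - rvec y"
  and rvec_axis: "rvec (axis i 1) = axis i 1"
  by (simp_all add: rvec_def vec_eq_iff axis_def)

lemma nbr_iff: "nbr x y \<longleftrightarrow> (\<Sum>j\<in>UNIV. (y $ j - x $ j)\<^sup>2) = (1::int)"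
proof -
  have "norm (rvec x - rvec y) = sqrt (real_of_int (\<Sum>j\<in>UNIV. (y $ j - x $ j)\<^sup>2))"
    by (simp add: norm_vec_def L2_set_def rvec_def power2_commute)
  then show ?thesis
    unfolding nbr_def by (metis of_int_eq_1_iff real_sqrt_eq_1_iff)
qed

lemma nbr_irrefl: "\<not> nbr x x"
  by (simp add: nbr_iff)

lemma nbr_add_axis: "nbr x (x + axis i 1)"
  and nbr_diff_axis: "nbr x (x - axis i 1)"
proof -
  have "(axis i 1 $ j)\<^sup>2 = (if j = i then 1 else (0::int))" for j
    by (simp add: axis_def)
  then have "(\<Sum>j\<in>UNIV. (axis i 1 $ j)\<^sup>2) = (1::int)"
    by simp
  then show "nbr x (x + axis i 1)" "nbr x (x - axis i 1)"
    unfolding nbr_iff by simp_all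
qed

lemma nbr_cases:
  assumes "nbr x y"
  obtains "y $ i = x $ i" | "y = x + axis i 1" | "y = x - axis i 1"
proof -
  define d where "d = y $ i - x $ i"
  have split: "d\<^sup>2 + (\<Sum>j\<in>UNIV - {i}. (y $ j - x $ j)\<^sup>2) = 1"
    using assms unfolding nbr_iff d_def by (metis (no_types, lifting) UNIV_I finite sum.remove)
  have "0 \<le> (\<Sum>j\<in>UNIV - {i}. (y $ j - x $ j)\<^sup>2)"
    by (simp add: sum_nonneg)
  then have "\<bar>d\<bar> \<le> 1"
    using split abs_square_le_1[of d] by linarith
  then consider "d = 0" | "d = 1" | "d = -1"
    by linarith
  moreover have axis_step: "y = x + d *s axis i 1" if "d = 1 \<or> d = -1"
  proof -
    have "y $ j = x $ j" if "j \<noteq> i" for j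
    proof -
      have "(\<Sum>j\<in>UNIV - {i}. (y $ j - x $ j)\<^sup>2) = 0"
        using split \<open>d = 1 \<or> d = -1\<close> by auto
      then show ?thesis
        using that by (simp add: sum_nonneg_eq_0_iff)
    qed
    then show ?thesis
      by (simp add: vec_eq_iff axis_def d_def)
  qed
  ultimately show ?thesis
  proof cases
    case 1
    then show ?thesis
      using that(1) by (simp add: d_def)
  next
    case 2
    then show ?thesis
      using that(2) axis_step by simp
  next
    case 3
    then have "y = x + (-1) *s axis i 1"
      using axis_step by simp
    then show ?thesis
      using that(3) by (simp add: vec_eq_iff axis_def)
  qed
qed

lemma finite_zbox: "finite (zbox x r)"
proof -
  have "zbox x r \<subseteq> (\<lambda>f. \<chi> i. f i) ` (PiE UNIV (\<lambda>i. {x $ i - r .. x $ i + r}))"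
  proof
    fix y assume y: "y \<in> zbox x r"
    have "y $ i \<in> {x $ i - r .. x $ i + r}" for i
    proof -
      have "\<bar>y $ i - x $ i\<bar> \<le> r"
        using y by (simp add: zbox_def)
      then show ?thesis
        by auto
    qed
    then have "(\<lambda>i. y $ i) \<in> PiE UNIV (\<lambda>i. {x $ i - r .. x $ i + r})"
      by auto
    then show "y \<in> (\<lambda>f. \<chi> i. f i) ` (PiE UNIV (\<lambda>i. {x $ i - r .. x $ i + r}))"
      by (intro image_eqI[where x="\<lambda>i. y $ i"]) auto
  qed
  then show ?thesis
    by (rule finite_subset) (intro finite_imageI finite_PiE, auto)
qed

definition nbrs :: "int^'d \<Rightarrow> (int^'d) set" where
  "nbrs x = {y. nbr x y}"

lemma finite_nbrs: "finite (nbrs x)"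
proof (rule finite_subset[OF _ finite_zbox])
  show "nbrs x \<subseteq> zbox x 1"
  proof
    fix y assume "y \<in> nbrs x"
    then have "nbr x y"
      by (simp add: nbrs_def)
    then have "\<bar>y $ i - x $ i\<bar> \<le> 1" for i
      by (rule nbr_cases[of x y i]) (auto simp: axis_def)
    then show "y \<in> zbox x 1"
      by (simp add: zbox_def)
  qed
qed

lemma card_nbrs: "card (nbrs (x::int^'d)) = card (nbrs (0::int^'d))"
proof -
  have "nbrs x = (\<lambda>y. y + x) ` nbrs 0"
  proof (rule set_eqI)
    fix z
    have "z \<in> nbrs x \<longleftrightarrow> z - x \<in> nbrs 0"
      by (simp add: nbrs_def nbr_iff)
    then show "z \<in> nbrs x \<longleftrightarrow> z \<in> (\<lambda>y. y + x) ` nbrs 0"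
      by (auto intro: rev_image_eqI[of "z - x"])
  qed
  then show ?thesis
    by (simp add: card_image inj_on_def)
qed

section \<open>Leaving a box under a drift condition\<close>

definition box_potential :: "int^'d \<Rightarrow> int \<Rightarrow> 'd \<Rightarrow> int^'d \<Rightarrow> real" where
  "box_potential c L i y = max 0 ((real_of_int L + 1)\<^sup>2 - (real_of_int (y $ i - c $ i))\<^sup>2)"

lemma box_potential_nonneg: "0 \<le> box_potential c L i y"
  and box_potential_le: "box_potential c L i y \<le> (real_of_int L + 1)\<^sup>2"
  by (simp_all add: box_potential_def)

lemma box_potential_step:
  assumes x: "x \<in> zbox c L" and y: "\<bar>y $ i - x $ i\<bar> \<le> 1"
  shows "box_potential c L i y = box_potential c L i x
           - (2 * real_of_int (x $ i - c $ i) * real_of_int (y $ i - x $ i) + (real_of_int (y $ i - x $ i))\<^sup>2)"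
proof -
  define a where "a = real_of_int (x $ i - c $ i)"
  define d where "d = real_of_int (y $ i - x $ i)"
  have "\<bar>x $ i - c $ i\<bar> \<le> L"
    using x by (simp add: zbox_def)
  then have a: "\<bar>a\<bar> \<le> real_of_int L"
    unfolding a_def by linarith
  have "\<bar>d\<bar> \<le> 1"
    using y by (simp add: d_def flip: of_int_abs)
  then have "(a + d)\<^sup>2 \<le> (real_of_int L + 1)\<^sup>2" and "a\<^sup>2 \<le> (real_of_int L + 1)\<^sup>2"
    using a by (simp_all add: abs_le_square_iff[symmetric])
  moreover have "real_of_int (x $ i - c $ i) = a" "real_of_int (y $ i - c $ i) = a + d"
    by (simp_all add: a_def d_def)
  ultimately have "box_potential c L i y = (real_of_int L + 1)\<^sup>2 - (a + d)\<^sup>2"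
    and "box_potential c L i x = (real_of_int L + 1)\<^sup>2 - a\<^sup>2"
    unfolding box_potential_def by simp_all
  then show ?thesis
    unfolding a_def[symmetric] d_def[symmetric] by (simp add: power2_sum)
qed

locale bounded_rates =
  fixes q :: "int^'d \<Rightarrow> int^'d \<Rightarrow> real" and Q :: real
  assumes rate_nonneg: "\<And>x y. 0 \<le> q x y"
    and total_rate_le: "\<And>x. total_rate q x \<le> Q"
begin

lemma total_rate_eq: "total_rate q x = (\<Sum>y\<in>nbrs x. q x y)"
  by (simp add: total_rate_def nbrs_def)

lemma total_rate_nonneg: "0 \<le> total_rate q x"
  unfolding total_rate_eq by (simp add: sum_nonneg rate_nonneg)

lemma bound_nonneg: "0 \<le> Q"
  using total_rate_nonneg[of 0] total_rate_le[of 0] by linarith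

lemma unif_rate_ge: "total_rate q x + 1 \<le> unif_rate q"
proof -
  have "bdd_above (range (total_rate q))"
    by (rule bdd_aboveI[where M=Q]) (auto simp: total_rate_le)
  then show ?thesis
    unfolding unif_rate_def using cSUP_upper[OF UNIV_I, of "total_rate q" x] by simp
qed

lemma unif_rate_le: "unif_rate q \<le> 1 + Q"
  unfolding unif_rate_def using cSUP_least[of UNIV "total_rate q" Q] total_rate_le by simp

lemma one_le_unif_rate: "1 \<le> unif_rate q"
  using unif_rate_ge[of 0] total_rate_nonneg[of 0] by simp

lemma pmf_unif_kernel:
  "pmf (unif_kernel q x) y = (if y = x then 1 - total_rate q x / unif_rate q
                              else if nbr x y then q x y / unif_rate q else 0)"
proof -
  define k where "k = (\<lambda>y. if y = x then 1 - total_rate q x / unif_rate q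
                             else if nbr x y then q x y / unif_rate q else 0)"
  have k_nonneg: "0 \<le> k y" for y
    using unif_rate_ge[of x] one_le_unif_rate by (simp add: k_def rate_nonneg field_simps)
  have "(\<Sum>y\<in>insert x (nbrs x). k y) = 1"
  proof -
    have "(\<Sum>y\<in>nbrs x. k y) = (\<Sum>y\<in>nbrs x. q x y) / unif_rate q"
      unfolding sum_divide_distrib by (rule sum.cong) (auto simp: k_def nbrs_def nbr_irrefl)
    moreover have "x \<notin> nbrs x"
      by (simp add: nbrs_def nbr_irrefl)
    ultimately show ?thesis
      by (simp add: finite_nbrs total_rate_eq k_def)
  qed
  moreover have "(\<integral>\<^sup>+y. ennreal (k y) \<partial>count_space UNIV) = (\<Sum>y\<in>insert x (nbrs x). ennreal (k y))"
    by (rule nn_integral_count_space') (use finite_nbrs[of x] in \<open>auto simp: k_def nbrs_def\<close>)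
  ultimately have total: "(\<integral>\<^sup>+y. ennreal (k y) \<partial>count_space UNIV) = 1"
    by (simp add: sum_ennreal k_nonneg)
  moreover have "unif_kernel q x = embed_pmf k"
    by (simp add: unif_kernel_def k_def)
  ultimately have "pmf (unif_kernel q x) y = k y"
    by (simp add: pmf_embed_pmf k_nonneg)
  then show ?thesis
    by (simp add: k_def)
qed

lemma set_pmf_unif_kernel: "set_pmf (unif_kernel q x) \<subseteq> insert x (nbrs x)"
  by (auto simp: set_pmf_eq pmf_unif_kernel nbrs_def)

lemma integral_unif_kernel_coord:
  fixes g :: "int \<Rightarrow> real"
  assumes g0: "g 0 = 0"
  shows "(\<integral>y. g (y $ i - x $ i) \<partial>unif_kernel q x)
       = (q x (x + axis i 1) * g 1 + q x (x - axis i 1) * g (-1)) / unif_rate q"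
proof -
  let ?p = "x + axis i 1" and ?m = "x - axis i 1"
  have pm: "?p \<noteq> ?m" "?p \<noteq> x" "?m \<noteq> x"
    by (auto simp: vec_eq_iff axis_def)
  have "(\<integral>y. g (y $ i - x $ i) \<partial>unif_kernel q x)
      = (\<Sum>y\<in>{?p, ?m}. g (y $ i - x $ i) * pmf (unif_kernel q x) y)"
  proof (rule integral_measure_pmf_real)
    fix y assume y: "y \<in> set_pmf (unif_kernel q x)" "g (y $ i - x $ i) \<noteq> 0"
    then have "y \<noteq> x"
      using g0 by auto
    then have "nbr x y"
      using y(1) set_pmf_unif_kernel[of x] by (auto simp: nbrs_def)
    then show "y \<in> {?p, ?m}"
      using y(2) g0 by (cases rule: nbr_cases[of x y i]) auto
  qed simp
  also have "\<dots> = (q x ?p * g 1 + q x ?m * g (-1)) / unif_rate q"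
  proof -
    have "?p $ i - x $ i = 1" "?m $ i - x $ i = -1"
      by (simp_all add: axis_def)
    then show ?thesis
      using pm by (simp add: pmf_unif_kernel nbr_add_axis nbr_diff_axis add_divide_distrib mult.commute)
  qed
  finally show ?thesis .
qed

lemma box_potential_drift:
  assumes x: "x \<in> zbox c L" and \<rho>: "0 \<le> \<rho>"
    and lower: "\<rho> \<le> q x (x + axis i 1) + q x (x - axis i 1)"
    and drift: "4 * real_of_int L * \<bar>q x (x + axis i 1) - q x (x - axis i 1)\<bar>
                  \<le> q x (x + axis i 1) + q x (x - axis i 1)"
  shows "(\<integral>y. box_potential c L i y \<partial>unif_kernel q x) \<le> box_potential c L i x - \<rho> / (2 * (1 + Q))"
proof -
  let ?qp = "q x (x + axis i 1)" and ?qm = "q x (x - axis i 1)"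
  define a where "a = real_of_int (x $ i - c $ i)"
  define g where "g d = 2 * a * real_of_int d + (real_of_int d)\<^sup>2" for d :: int
  have finite_support: "finite (set_pmf (unif_kernel q x))"
    using set_pmf_unif_kernel finite_subset finite_nbrs by blast
  have "(\<integral>y. box_potential c L i y \<partial>unif_kernel q x)
      = (\<integral>y. box_potential c L i x - g (y $ i - x $ i) \<partial>unif_kernel q x)"
  proof (rule integral_cong_AE)
    show "AE y in unif_kernel q x. box_potential c L i y = box_potential c L i x - g (y $ i - x $ i)"
    proof (rule AE_pmfI)
      fix y assume "y \<in> set_pmf (unif_kernel q x)"
      then have "y = x \<or> nbr x y"
        using set_pmf_unif_kernel by (auto simp: nbrs_def)
      then have "\<bar>y $ i - x $ i\<bar> \<le> 1"
        by (auto simp: axis_def elim: nbr_cases[of x y i])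
      then show "box_potential c L i y = box_potential c L i x - g (y $ i - x $ i)"
        unfolding g_def a_def by (rule box_potential_step[OF x])
    qed
  qed simp_all
  also have "\<dots> = box_potential c L i x - (\<integral>y. g (y $ i - x $ i) \<partial>unif_kernel q x)"
    using finite_support by (simp add: integrable_measure_pmf_finite)
  also have "(\<integral>y. g (y $ i - x $ i) \<partial>unif_kernel q x) = ((?qp + ?qm) + 2 * a * (?qp - ?qm)) / unif_rate q"
    by (subst integral_unif_kernel_coord) (simp_all add: g_def algebra_simps)
  finally have integral_eq: "(\<integral>y. box_potential c L i y \<partial>unif_kernel q x)
      = box_potential c L i x - ((?qp + ?qm) + 2 * a * (?qp - ?qm)) / unif_rate q" .
  have "\<rho> / (2 * (1 + Q)) \<le> ((?qp + ?qm) + 2 * a * (?qp - ?qm)) / unif_rate q"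
  proof -
    have "\<bar>x $ i - c $ i\<bar> \<le> L"
      using x by (simp add: zbox_def)
    then have "\<bar>a\<bar> \<le> real_of_int L"
      unfolding a_def by linarith
    then have "\<bar>2 * a * (?qp - ?qm)\<bar> \<le> 2 * real_of_int L * \<bar>?qp - ?qm\<bar>"
      by (simp add: abs_mult mult_right_mono)
    then have "\<rho> / 2 \<le> (?qp + ?qm) + 2 * a * (?qp - ?qm)"
      using lower drift by linarith
    moreover have "\<rho> / (2 * (1 + Q)) \<le> (\<rho> / 2) / unif_rate q"
      using unif_rate_le one_le_unif_rate \<rho> by (simp add: frac_le)
    moreover have "(\<rho> / 2) / unif_rate q \<le> ((?qp + ?qm) + 2 * a * (?qp - ?qm)) / unif_rate q"
      using calculation(1) one_le_unif_rate by (intro divide_right_mono) auto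
    ultimately show ?thesis
      by linarith
  qed
  with integral_eq show ?thesis
    by linarith
qed

lemma exit_after_box_le:
  assumes \<rho>: "0 < \<rho>" and t: "0 < t"
    and lower: "\<And>y. y \<in> zbox c L \<Longrightarrow> \<rho> \<le> q y (y + axis i 1) + q y (y - axis i 1)"
    and drift: "\<And>y. y \<in> zbox c L \<Longrightarrow> 4 * real_of_int L * \<bar>q y (y + axis i 1) - q y (y - axis i 1)\<bar>
                                      \<le> q y (y + axis i 1) + q y (y - axis i 1)"
  shows "exit_after q x (zbox c L) t
           \<le> exp (- t / 3) + 2 * exp (- real (nat \<lfloor>t / 4\<rfloor>) * (\<rho> / (12 * (1 + Q))) / (real_of_int L + 1)\<^sup>2)"
proof -
  let ?n = "nat \<lfloor>t / 4\<rfloor>"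
  have "exit_after q x (zbox c L) t \<le> exp (- t / 3) + stay_prob (unif_kernel q) (zbox c L) ?n x"
    by (rule exit_after_le_stay_prob[OF one_le_unif_rate t])
  also have "stay_prob (unif_kernel q) (zbox c L) ?n x
      \<le> 2 * exp (- real ?n * (\<rho> / (2 * (1 + Q))) / (6 * (real_of_int L + 1)\<^sup>2))"
  proof (rule stay_prob_exp_decay[where W = "box_potential c L i"])
    show "integrable (measure_pmf (unif_kernel q y)) (box_potential c L i)" for y
      by (rule measure_pmf.integrable_const_bound[where B = "(real_of_int L + 1)\<^sup>2"])
         (auto simp: box_potential_nonneg box_potential_le)
    show "0 < \<rho> / (2 * (1 + Q))"
      using \<rho> bound_nonneg by simp
    show "(\<integral>y. box_potential c L i y \<partial>unif_kernel q y') \<le> box_potential c L i y' - \<rho> / (2 * (1 + Q))"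
      if "y' \<in> zbox c L" for y'
      by (rule box_potential_drift[OF that less_imp_le[OF \<rho>] lower[OF that] drift[OF that]])
  qed (simp_all add: box_potential_nonneg box_potential_le)
  also have "- real ?n * (\<rho> / (2 * (1 + Q))) / (6 * (real_of_int L + 1)\<^sup>2)
      = - real ?n * (\<rho> / (12 * (1 + Q))) / (real_of_int L + 1)\<^sup>2"
    by (simp add: field_simps)
  finally show ?thesis
    by simp
qed

end

lemma exit_estimate_le_exp_powr:
  fixes s r \<alpha> a :: real
  assumes s: "1 \<le> s" and r: "0 < r" and a: "0 < a"
  shows "exp (- (s powr (2 * \<alpha>)) / 3)
           + 2 * exp (- real (nat \<lfloor>s powr (2 * \<alpha>) / 4\<rfloor>) * a / (real_of_int \<lfloor>s powr r\<rfloor> + 1)\<^sup>2)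
         \<le> (1 + 2 * exp (a / 4)) * exp (- min (1/3) (a/16) * s powr (2 * \<alpha> - 2 * r))"
proof -
  define t where "t = s powr (2 * \<alpha>)"
  define B where "B = (real_of_int \<lfloor>s powr r\<rfloor> + 1)\<^sup>2"
  define C5 where "C5 = min (1/3) (a/16)"
  define e where "e = s powr (2 * \<alpha> - 2 * r)"
  have sr: "1 \<le> s powr r"
    using s r by (simp add: ge_one_powr_ge_zero)
  have B_ge: "4 \<le> B"
  proof -
    have "1 \<le> \<lfloor>s powr r\<rfloor>"
      using sr by (simp add: one_le_floor)
    then have "2 \<le> real_of_int \<lfloor>s powr r\<rfloor> + 1"
      by linarith
    then show ?thesis
      unfolding B_def using power_mono[of 2 _ 2] by fastforce
  qed
  have B_le: "B \<le> 4 * s powr (2 * r)"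
  proof -
    have "B \<le> (2 * s powr r)\<^sup>2"
      unfolding B_def using sr by (intro power_mono) linarith+
    also have "\<dots> = 4 * s powr (2 * r)"
      using s by (simp add: power2_eq_square powr_add[symmetric])
    finally show ?thesis .
  qed
  have t_eq: "t = e * s powr (2 * r)"
    using s by (simp add: t_def e_def powr_add[symmetric])
  have e: "0 \<le> e" "1 \<le> s powr (2 * r)"
    using s r by (simp_all add: e_def ge_one_powr_ge_zero)
  have first: "exp (- t / 3) \<le> exp (- C5 * e)"
  proof -
    have "C5 * e \<le> 1/3 * (e * s powr (2 * r))"
      using e by (intro mult_mono) (auto simp: C5_def mult_le_cancel_left1)
    then show ?thesis
      by (simp add: t_eq)
  qed
  have second: "exp (- real (nat \<lfloor>t / 4\<rfloor>) * a / B) \<le> exp (a / 4) * exp (- C5 * e)"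
  proof -
    have "C5 * e \<le> a / 16 * e"
      using e by (intro mult_right_mono) (auto simp: C5_def)
    also have "\<dots> = t * a / (4 * (4 * s powr (2 * r)))"
      using e s by (simp add: t_eq field_simps)
    also have "\<dots> \<le> t * a / (4 * B)"
      using B_ge B_le a e t_eq by (intro divide_left_mono) (auto intro!: mult_nonneg_nonneg mult_pos_pos)
    also have "\<dots> = (t / 4 - 1) * a / B + a / B"
      using B_ge by (simp add: field_simps)
    also have "\<dots> \<le> real (nat \<lfloor>t / 4\<rfloor>) * a / B + a / 4"
    proof (intro add_mono divide_right_mono mult_right_mono)
      show "t / 4 - 1 \<le> real (nat \<lfloor>t / 4\<rfloor>)"
        by linarith
      show "a / B \<le> a / 4"
        using a B_ge by (intro divide_left_mono) auto
    qed (use a B_ge in auto)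
    finally show ?thesis
      by (simp flip: exp_add)
  qed
  have "exp (- t / 3) + 2 * exp (- real (nat \<lfloor>t / 4\<rfloor>) * a / B) \<le> exp (- C5 * e) + 2 * (exp (a / 4) * exp (- C5 * e))"
    using first second by linarith
  then show ?thesis
    by (simp add: t_def B_def C5_def e_def algebra_simps)
qed

lemma exit_after_box_powr_le:
  fixes r \<alpha> Q \<rho> :: real
  assumes r: "0 < r" and \<rho>: "0 < \<rho>" and Q: "0 \<le> Q"
  obtains C4 C5 where "0 < C4" "0 < C5"
    and "\<And>s q c i x. 1 \<le> s \<Longrightarrow> bounded_rates q Q \<Longrightarrow>
      (\<And>y. y \<in> zbox c \<lfloor>s powr r\<rfloor> \<Longrightarrow> \<rho> \<le> q y (y + axis i 1) + q y (y - axis i 1)) \<Longrightarrow>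
      (\<And>y. y \<in> zbox c \<lfloor>s powr r\<rfloor> \<Longrightarrow>
         4 * real_of_int \<lfloor>s powr r\<rfloor> * \<bar>q y (y + axis i 1) - q y (y - axis i 1)\<bar>
           \<le> q y (y + axis i 1) + q y (y - axis i 1)) \<Longrightarrow>
      exit_after q x (zbox c \<lfloor>s powr r\<rfloor>) (s powr (2 * \<alpha>))
        \<le> C4 * exp (- C5 * s powr (2 * \<alpha> - 2 * r))"
proof
  define a where "a = \<rho> / (12 * (1 + Q))"
  have a: "0 < a"
    using \<rho> Q by (simp add: a_def)
  show "0 < 1 + 2 * exp (a / 4)" "0 < min (1/3) (a/16)"
    using a by (auto intro: add_pos_nonneg)
  fix s :: real and q :: "int^'d \<Rightarrow> int^'d \<Rightarrow> real" and c i x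
  assume s: "1 \<le> s" and q: "bounded_rates q Q"
    and lower: "\<And>y. y \<in> zbox c \<lfloor>s powr r\<rfloor> \<Longrightarrow> \<rho> \<le> q y (y + axis i 1) + q y (y - axis i 1)"
    and drift: "\<And>y. y \<in> zbox c \<lfloor>s powr r\<rfloor> \<Longrightarrow>
         4 * real_of_int \<lfloor>s powr r\<rfloor> * \<bar>q y (y + axis i 1) - q y (y - axis i 1)\<bar>
           \<le> q y (y + axis i 1) + q y (y - axis i 1)"
  have "exit_after q x (zbox c \<lfloor>s powr r\<rfloor>) (s powr (2 * \<alpha>))
      \<le> exp (- (s powr (2 * \<alpha>)) / 3)
         + 2 * exp (- real (nat \<lfloor>s powr (2 * \<alpha>) / 4\<rfloor>) * a / (real_of_int \<lfloor>s powr r\<rfloor> + 1)\<^sup>2)"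
    unfolding a_def using s by (intro bounded_rates.exit_after_box_le[OF q \<rho> _ lower drift]) simp
  also have "\<dots> \<le> (1 + 2 * exp (a / 4)) * exp (- min (1/3) (a/16) * s powr (2 * \<alpha> - 2 * r))"
    by (rule exit_estimate_le_exp_powr[OF s r a])
  finally show "exit_after q x (zbox c \<lfloor>s powr r\<rfloor>) (s powr (2 * \<alpha>))
      \<le> (1 + 2 * exp (a / 4)) * exp (- min (1/3) (a/16) * s powr (2 * \<alpha> - 2 * r))" .
qed

section \<open>Rates of the form \<open>f(y) / (2d f(x))\<close>\<close>

definition ratio_rate :: "(int^'d \<Rightarrow> real) \<Rightarrow> int^'d \<Rightarrow> int^'d \<Rightarrow> real" where
  "ratio_rate f x y = f y / (2 * real CARD('d) * f x)"

lemma srw_rate_eq_ratio_rate: "srw_rate = ratio_rate (\<lambda>_. 1)"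
  by (simp add: fun_eq_iff srw_rate_def ratio_rate_def)

text \<open>No positivity is needed: where \<open>phi_per\<close> vanishes both sides are \<open>0\<close>, by division by zero.\<close>

lemma tilted_rate_eq_ratio_rate: "tilted_rate \<phi> N x0 r5 = ratio_rate (phi_per \<phi> N x0 r5)"
  by (simp add: fun_eq_iff tilted_rate_def mu_bar_def nu_bar_def ratio_rate_def power2_eq_square)

lemma ratio_rate_bounded:
  fixes f :: "int^'d \<Rightarrow> real"
  assumes f: "\<And>y. m \<le> f y \<and> f y \<le> M" and m: "0 < m"
  shows "bounded_rates (ratio_rate f) (real (card (nbrs (0::int^'d))) * (M / (2 * real CARD('d) * m)))"
proof
  fix x y :: "int^'d"
  have f_pos: "0 < f z" for z
    using f[of z] m by linarith
  show "0 \<le> ratio_rate f x y"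
    using f_pos[of x] f_pos[of y] by (simp add: ratio_rate_def)
  have "ratio_rate f x y \<le> M / (2 * real CARD('d) * m)" for y
    unfolding ratio_rate_def using f[of x] f[of y] f_pos[of y] m by (intro frac_le) auto
  then have "total_rate (ratio_rate f) x \<le> real (card (nbrs x)) * (M / (2 * real CARD('d) * m))"
    unfolding total_rate_def nbrs_def[symmetric] by (rule sum_bounded_above)
  then show "total_rate (ratio_rate f) x \<le> real (card (nbrs (0::int^'d))) * (M / (2 * real CARD('d) * m))"
    by (simp add: card_nbrs[of x])
qed

lemma ratio_rate_lower:
  fixes f :: "int^'d \<Rightarrow> real"
  assumes f: "\<And>y. m \<le> f y \<and> f y \<le> M" and m: "0 < m"
  shows "m / (real CARD('d) * M) \<le> ratio_rate f x (x + axis i 1) + ratio_rate f x (x - axis i 1)"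
proof -
  have bound: "m / (2 * real CARD('d) * M) \<le> ratio_rate f x y" for y
    unfolding ratio_rate_def using f[of x] f[of y] m by (intro frac_le) auto
  show ?thesis
    using bound[of "x + axis i 1"] bound[of "x - axis i 1"] by (simp add: field_simps)
qed

lemma ratio_rate_drift:
  fixes f :: "int^'d \<Rightarrow> real"
  assumes f: "\<And>y. m \<le> f y" and m: "0 < m"
    and diff: "2 * L * \<bar>f (x + axis i 1) - f (x - axis i 1)\<bar> \<le> m"
  shows "4 * L * \<bar>ratio_rate f x (x + axis i 1) - ratio_rate f x (x - axis i 1)\<bar>
           \<le> ratio_rate f x (x + axis i 1) + ratio_rate f x (x - axis i 1)"
proof -
  let ?fp = "f (x + axis i 1)" and ?fm = "f (x - axis i 1)"
  define D where "D = 2 * real CARD('d) * f x"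
  have D: "0 < D"
    using f[of x] m by (simp add: D_def)
  have "4 * L * \<bar>?fp - ?fm\<bar> \<le> ?fp + ?fm"
    using diff f[of "x + axis i 1"] f[of "x - axis i 1"] by linarith
  then have "4 * L * \<bar>?fp - ?fm\<bar> / D \<le> (?fp + ?fm) / D"
    using D by (simp add: divide_right_mono)
  moreover have "4 * L * \<bar>?fp / D - ?fm / D\<bar> = 4 * L * \<bar>?fp - ?fm\<bar> / D"
    using D by (simp add: diff_divide_distrib[symmetric] abs_div)
  ultimately show ?thesis
    by (simp add: ratio_rate_def D_def[symmetric] add_divide_distrib)
qed

lemma ratio_rate_exit_le:
  fixes r \<alpha> m M :: real
  assumes r: "0 < r" and m: "0 < m" "m \<le> M"
  obtains C4 C5 where "0 < C4" "0 < C5"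
    and "\<And>s (f :: int^'d \<Rightarrow> real) c i x. 1 \<le> s \<Longrightarrow> (\<And>y. m \<le> f y \<and> f y \<le> M) \<Longrightarrow>
      (\<And>y. y \<in> zbox c \<lfloor>s powr r\<rfloor> \<Longrightarrow>
         2 * real_of_int \<lfloor>s powr r\<rfloor> * \<bar>f (y + axis i 1) - f (y - axis i 1)\<bar> \<le> m) \<Longrightarrow>
      exit_after (ratio_rate f) x (zbox c \<lfloor>s powr r\<rfloor>) (s powr (2 * \<alpha>))
        \<le> C4 * exp (- C5 * s powr (2 * \<alpha> - 2 * r))"
proof -
  define Q where "Q = real (card (nbrs (0::int^'d))) * (M / (2 * real CARD('d) * m))"
  define \<rho> where "\<rho> = m / (real CARD('d) * M)"
  have "0 < \<rho>" "0 \<le> Q"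
    using m by (simp_all add: \<rho>_def Q_def)
  then obtain C4 C5 where C: "0 < C4" "0 < C5"
    and bound: "\<And>s (q :: int^'d \<Rightarrow> int^'d \<Rightarrow> real) c i x. 1 \<le> s \<Longrightarrow> bounded_rates q Q \<Longrightarrow>
      (\<And>y. y \<in> zbox c \<lfloor>s powr r\<rfloor> \<Longrightarrow> \<rho> \<le> q y (y + axis i 1) + q y (y - axis i 1)) \<Longrightarrow>
      (\<And>y. y \<in> zbox c \<lfloor>s powr r\<rfloor> \<Longrightarrow>
         4 * real_of_int \<lfloor>s powr r\<rfloor> * \<bar>q y (y + axis i 1) - q y (y - axis i 1)\<bar>
           \<le> q y (y + axis i 1) + q y (y - axis i 1)) \<Longrightarrow>
      exit_after q x (zbox c \<lfloor>s powr r\<rfloor>) (s powr (2 * \<alpha>)) \<le> C4 * exp (- C5 * s powr (2 * \<alpha> - 2 * r))"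
    using exit_after_box_powr_le[OF r] by blast
  show ?thesis
  proof (rule that[OF C])
    fix s c i x and f :: "int^'d \<Rightarrow> real"
    assume s: "1 \<le> s" and f: "\<And>y. m \<le> f y \<and> f y \<le> M"
      and diff: "\<And>y. y \<in> zbox c \<lfloor>s powr r\<rfloor> \<Longrightarrow>
         2 * real_of_int \<lfloor>s powr r\<rfloor> * \<bar>f (y + axis i 1) - f (y - axis i 1)\<bar> \<le> m"
    show "exit_after (ratio_rate f) x (zbox c \<lfloor>s powr r\<rfloor>) (s powr (2 * \<alpha>))
        \<le> C4 * exp (- C5 * s powr (2 * \<alpha> - 2 * r))"
    proof (rule bound[OF s])
      show "bounded_rates (ratio_rate f) Q"
        unfolding Q_def by (rule ratio_rate_bounded[OF f m(1)])
      show "\<rho> \<le> ratio_rate f y (y + axis i 1) + ratio_rate f y (y - axis i 1)" for y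
        unfolding \<rho>_def by (rule ratio_rate_lower[OF f m(1)])
      show "4 * real_of_int \<lfloor>s powr r\<rfloor> * \<bar>ratio_rate f y (y + axis i 1) - ratio_rate f y (y - axis i 1)\<bar>
          \<le> ratio_rate f y (y + axis i 1) + ratio_rate f y (y - axis i 1)"
        if "y \<in> zbox c \<lfloor>s powr r\<rfloor>" for y
        by (rule ratio_rate_drift[OF _ m(1) diff[OF that]]) (use f in blast)
    qed
  qed
qed

lemma srw_rate_exit_le:
  fixes r2 \<alpha> :: real
  assumes r2: "0 < r2"
  obtains C4 C5 where "0 < C4" "0 < C5"
    and "\<And>N (x0 :: int^'d) x. 1 \<le> N \<Longrightarrow>
      exit_after srw_rate x (zbox x0 \<lfloor>real N powr r2\<rfloor>) (real N powr (2 * \<alpha>))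
        \<le> C4 * exp (- C5 * real N powr (2 * \<alpha> - 2 * r2))"
proof -
  obtain C4 C5 where C: "0 < C4" "0 < C5"
    and bound: "\<And>s (f :: int^'d \<Rightarrow> real) c i x. 1 \<le> s \<Longrightarrow> (\<And>y. 1 \<le> f y \<and> f y \<le> 1) \<Longrightarrow>
      (\<And>y. y \<in> zbox c \<lfloor>s powr r2\<rfloor> \<Longrightarrow>
         2 * real_of_int \<lfloor>s powr r2\<rfloor> * \<bar>f (y + axis i 1) - f (y - axis i 1)\<bar> \<le> 1) \<Longrightarrow>
      exit_after (ratio_rate f) x (zbox c \<lfloor>s powr r2\<rfloor>) (s powr (2 * \<alpha>))
        \<le> C4 * exp (- C5 * s powr (2 * \<alpha> - 2 * r2))"
    using ratio_rate_exit_le[OF r2 zero_less_one order_refl] by blast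
  show ?thesis
  proof (rule that[OF C])
    fix N :: nat and x0 x :: "int^'d"
    assume "1 \<le> N"
    then show "exit_after srw_rate x (zbox x0 \<lfloor>real N powr r2\<rfloor>) (real N powr (2 * \<alpha>))
        \<le> C4 * exp (- C5 * real N powr (2 * \<alpha> - 2 * r2))"
      unfolding srw_rate_eq_ratio_rate by (intro bound) auto
  qed
qed

lemma smooth_on_iter_deriv:
  assumes "smooth_on U g"
  shows "\<forall>x\<in>U. iter_deriv vs g differentiable (at x)" "continuous_on U (iter_deriv vs g)"
  using assms unfolding smooth_on_def by blast+

lemma smooth_on_differentiable: "smooth_on U g \<Longrightarrow> x \<in> U \<Longrightarrow> g differentiable (at x)"
  using smooth_on_iter_deriv(1)[of U g "[]"] by simp

lemma smooth_on_continuous_on: "smooth_on U g \<Longrightarrow> continuous_on U g"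
  using smooth_on_iter_deriv(2)[of U g "[]"] by simp

lemma smooth_on_continuous_on_derivative:
  "smooth_on U g \<Longrightarrow> continuous_on U (\<lambda>x. frechet_derivative g (at x) v)"
  using smooth_on_iter_deriv(2)[of U g "[v]"] by simp

lemma smooth_on_closed_continuous_on:
  assumes "smooth_on_closed K f"
  shows "continuous_on K f"
proof -
  obtain U g where "K \<subseteq> U" "smooth_on U g" and g: "\<forall>x\<in>K. g x = f x"
    using assms unfolding smooth_on_closed_def by blast
  then have "continuous_on K g"
    by (blast intro: continuous_on_subset smooth_on_continuous_on)
  then show ?thesis
    using g continuous_on_cong by blast
qed

text \<open>The directional derivatives along the basis are continuous, hence bounded on the
  compact set, which bounds the operator norm of the derivative.\<close>

lemma smooth_on_closed_lipschitz:
  fixes f :: "'a::euclidean_space \<Rightarrow> real"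
  assumes "smooth_on_closed K f" and S: "compact S" "convex S" "S \<subseteq> K"
  obtains Lp where "\<And>a b. a \<in> S \<Longrightarrow> b \<in> S \<Longrightarrow> \<bar>f a - f b\<bar> \<le> Lp * dist a b"
proof -
  obtain U g where U: "K \<subseteq> U" and g: "smooth_on U g" and fg: "\<forall>x\<in>K. g x = f x"
    using assms unfolding smooth_on_closed_def by blast
  have deriv: "(g has_derivative frechet_derivative g (at x)) (at x)" if "x \<in> S" for x
    using smooth_on_differentiable[OF g] that S U by (auto simp: frechet_derivative_works)
  have "\<exists>B. \<forall>x\<in>S. \<bar>frechet_derivative g (at x) v\<bar> \<le> B" for v
  proof -
    have "compact ((\<lambda>x. frechet_derivative g (at x) v) ` S)"
      using S U by (intro compact_continuous_image continuous_on_subset[OF smooth_on_continuous_on_derivative[OF g]]) auto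
    then have "bounded ((\<lambda>x. frechet_derivative g (at x) v) ` S)"
      by (rule compact_imp_bounded)
    then obtain B where "\<forall>y\<in>(\<lambda>x. frechet_derivative g (at x) v) ` S. norm y \<le> B"
      unfolding bounded_iff by blast
    then show ?thesis
      by auto
  qed
  then obtain B where B: "\<And>v x. x \<in> S \<Longrightarrow> \<bar>frechet_derivative g (at x) v\<bar> \<le> B v"
    by metis
  define Lp where "Lp = (\<Sum>v\<in>Basis. B v)"
  have "norm (g a - g b) \<le> Lp * norm (a - b)" if "a \<in> S" "b \<in> S" for a b
  proof (rule differentiable_bound[OF S(2) _ _ that(1,2)])
    fix x assume x: "x \<in> S"
    show "(g has_derivative frechet_derivative g (at x)) (at x within S)"
      using deriv[OF x] by (rule has_derivative_at_withinI)
    show "onorm (frechet_derivative g (at x)) \<le> Lp"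
    proof (rule onorm_le)
      fix h :: 'a
      have lin: "linear (frechet_derivative g (at x))"
        using deriv[OF x] by (rule has_derivative_linear)
      have "frechet_derivative g (at x) h = (\<Sum>v\<in>Basis. (h \<bullet> v) * frechet_derivative g (at x) v)"
        by (subst euclidean_representation[symmetric, of h])
           (simp add: linear_sum[OF lin] linear_scale[OF lin])
      also have "\<bar>\<dots>\<bar> \<le> (\<Sum>v\<in>Basis. \<bar>h \<bullet> v\<bar> * \<bar>frechet_derivative g (at x) v\<bar>)"
        by (rule order_trans[OF sum_abs]) (simp add: abs_mult)
      also have "\<dots> \<le> (\<Sum>v\<in>Basis. norm h * B v)"
        by (intro sum_mono mult_mono Basis_le_norm B[OF x]) simp_all
      finally show "norm (frechet_derivative g (at x) h) \<le> Lp * norm h"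
        by (simp add: Lp_def sum_distrib_left mult.commute)
    qed
  qed
  then show ?thesis
    using S(3) fg by (intro that[of Lp]) (auto simp: dist_norm subset_iff)
qed

lemma continuous_on_compact_pos_bounds:
  fixes f :: "'a::topological_space \<Rightarrow> real"
  assumes "continuous_on S f" "compact S" "S \<noteq> {}" "\<And>x. x \<in> S \<Longrightarrow> 0 < f x"
  obtains m M where "0 < m" "m \<le> M" "\<And>x. x \<in> S \<Longrightarrow> m \<le> f x \<and> f x \<le> M"
proof -
  obtain x1 where x1: "x1 \<in> S" "\<forall>y\<in>S. f x1 \<le> f y"
    using continuous_attains_inf[OF assms(2,3,1)] by blast
  obtain x2 where "\<forall>y\<in>S. f y \<le> f x2"
    using continuous_attains_sup[OF assms(2,3,1)] by blast
  with x1 assms(4)[OF x1(1)] show ?thesis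
    by (intro that[of "f x1" "f x2"]) blast+
qed

section \<open>The tilted chain\<close>

definition box_fold :: "nat \<Rightarrow> int^'d \<Rightarrow> real \<Rightarrow> int^'d \<Rightarrow> int^'d" where
  "box_fold N x0 r5 y = (let L = \<lfloor>real N powr r5\<rfloor>
     in \<chi> i. x0 $ i + ((y $ i - x0 $ i + L + 1) mod (2 * L + 3)) - (L + 1))"

lemma phi_per_eq_box_fold: "phi_per \<phi> N x0 r5 y = \<phi> ((1 / real N) *\<^sub>R rvec (box_fold N x0 r5 y))"
  by (simp add: phi_per_def box_fold_def Let_def)

lemma box_fold_mem: "box_fold N x0 r5 y \<in> zbox x0 (\<lfloor>real N powr r5\<rfloor> + 1)"
proof -
  define L where "L = \<lfloor>real N powr r5\<rfloor>"
  have "0 \<le> L"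
    by (simp add: L_def)
  then have "\<bar>(y $ i - x0 $ i + L + 1) mod (2 * L + 3) - (L + 1)\<bar> \<le> L + 1" for i
    using pos_mod_sign[of "2 * L + 3"] pos_mod_bound[of "2 * L + 3"] by (smt (verit))
  moreover have "box_fold N x0 r5 y $ i - x0 $ i = (y $ i - x0 $ i + L + 1) mod (2 * L + 3) - (L + 1)" for i
    by (simp add: box_fold_def L_def Let_def)
  ultimately show ?thesis
    by (simp add: zbox_def L_def[symmetric])
qed

lemma box_fold_id: "y \<in> zbox x0 (\<lfloor>real N powr r5\<rfloor> + 1) \<Longrightarrow> box_fold N x0 r5 y = y"
proof -
  define L where "L = \<lfloor>real N powr r5\<rfloor>"
  assume "y \<in> zbox x0 (\<lfloor>real N powr r5\<rfloor> + 1)"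
  then have "\<bar>y $ i - x0 $ i\<bar> \<le> L + 1" for i
    by (simp add: zbox_def L_def)
  then have "(y $ i - x0 $ i + L + 1) mod (2 * L + 3) = y $ i - x0 $ i + L + 1" for i
    by (intro mod_pos_pos_trivial) (smt (verit))+
  then show ?thesis
    by (simp add: box_fold_def vec_eq_iff L_def[symmetric])
qed

lemma phi_per_bounds:
  assumes S: "\<And>y. y \<in> zbox x0 (\<lfloor>real N powr r5\<rfloor> + 1) \<Longrightarrow> (1 / real N) *\<^sub>R rvec y \<in> S"
    and bounds: "\<And>z. z \<in> S \<Longrightarrow> m \<le> \<phi> z \<and> \<phi> z \<le> M"
  shows "m \<le> phi_per \<phi> N x0 r5 y \<and> phi_per \<phi> N x0 r5 y \<le> M"
  unfolding phi_per_eq_box_fold by (rule bounds[OF S[OF box_fold_mem]])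

lemma phi_per_axis_diff:
  assumes S: "\<And>y. y \<in> zbox x0 (\<lfloor>real N powr r5\<rfloor> + 1) \<Longrightarrow> (1 / real N) *\<^sub>R rvec y \<in> S"
    and lip: "\<And>a b. a \<in> S \<Longrightarrow> b \<in> S \<Longrightarrow> \<bar>\<phi> a - \<phi> b\<bar> \<le> Lp * dist a b"
    and y: "y \<in> zbox x0 \<lfloor>real N powr r5\<rfloor>" and N: "0 < N"
  shows "\<bar>phi_per \<phi> N x0 r5 (y + axis i 1) - phi_per \<phi> N x0 r5 (y - axis i 1)\<bar> \<le> 2 * Lp / real N"
proof -
  let ?L = "\<lfloor>real N powr r5\<rfloor> + 1"
  have "\<bar>axis i (1::int) $ j\<bar> \<le> 1" for j
    by (simp add: axis_def)
  then have in_box: "y + axis i 1 \<in> zbox x0 ?L" "y - axis i 1 \<in> zbox x0 ?L"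
    using y by (auto simp: zbox_def abs_le_iff) (smt (verit))+
  have "dist ((1 / real N) *\<^sub>R rvec (y + axis i 1)) ((1 / real N) *\<^sub>R rvec (y - axis i 1)) = 2 / real N"
    using N by (simp add: dist_norm rvec_add rvec_diff rvec_axis scaleR_diff_right[symmetric] flip: scaleR_2)
  moreover have "box_fold N x0 r5 (y + axis i 1) = y + axis i 1"
    and "box_fold N x0 r5 (y - axis i 1) = y - axis i 1"
    using box_fold_id in_box by blast+
  ultimately show ?thesis
    using lip[OF S[OF in_box(1)] S[OF in_box(2)]] by (simp add: phi_per_eq_box_fold ac_simps)
qed

lemma eventually_powr_le_linear:
  fixes r a c \<epsilon> :: real
  assumes r: "r < 1" and \<epsilon>: "0 < \<epsilon>"
  shows "eventually (\<lambda>N::nat. a * real N powr r + c \<le> \<epsilon> * real N) sequentially"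
proof -
  define \<epsilon>' where "\<epsilon>' = \<epsilon> / (2 * (\<bar>a\<bar> + 1))"
  have \<epsilon>': "0 < \<epsilon>'" "\<bar>a\<bar> * \<epsilon>' \<le> \<epsilon> / 2"
    using \<epsilon> by (simp_all add: \<epsilon>'_def field_simps add_pos_nonneg)
  have "(\<lambda>x::real. x powr r) \<in> o[at_top](\<lambda>x. x powr 1)"
    by (rule powr_smallo_iff[THEN iffD2]) (simp_all add: filterlim_ident r)
  then have "(\<lambda>N::nat. real N powr r) \<in> o(\<lambda>N. real N powr 1)"
    by (rule landau_o.small.compose) (rule filterlim_real_sequentially)
  then have "eventually (\<lambda>N::nat. norm (real N powr r) \<le> \<epsilon>' * norm (real N powr 1)) sequentially"
    using \<epsilon>' by (intro landau_o.smallD) simp_all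
  moreover have "eventually (\<lambda>N::nat. 2 * c / \<epsilon> \<le> real N) sequentially"
    using filterlim_real_sequentially by (simp add: filterlim_at_top)
  ultimately show ?thesis
  proof eventually_elim
    case (elim N)
    then have "real N powr r \<le> \<epsilon>' * real N"
      by (cases "N = 0") simp_all
    then have "\<bar>a\<bar> * real N powr r \<le> \<bar>a\<bar> * (\<epsilon>' * real N)"
      by (rule mult_left_mono) simp
    then have "a * real N powr r \<le> \<bar>a\<bar> * (\<epsilon>' * real N)"
      by (smt (verit) abs_ge_self mult_right_mono powr_ge_zero)
    also have "\<dots> = (\<bar>a\<bar> * \<epsilon>') * real N"
      by (simp only: mult.assoc)
    also have "\<dots> \<le> \<epsilon> / 2 * real N"
      using \<epsilon>'(2) by (rule mult_right_mono) simp
    finally have "a * real N powr r \<le> \<epsilon> / 2 * real N" .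
    moreover have "c \<le> \<epsilon> / 2 * real N"
      using elim(2) \<epsilon> by (simp add: field_simps)
    ultimately show ?case
      by linarith
  qed
qed

lemma zbox_scaled_mem:
  assumes box: "\<forall>y\<in>zbox x0 K. rvec y \<in> (\<lambda>x. real N *\<^sub>R x) ` T"
    and L: "L \<le> K" and N: "0 < N" and y: "y \<in> zbox x0 L"
  shows "(1 / real N) *\<^sub>R rvec y \<in> T"
proof -
  have "y \<in> zbox x0 K"
    using y L by (auto simp: zbox_def intro: order_trans)
  then obtain z where "z \<in> T" "rvec y = real N *\<^sub>R z"
    using box by blast
  then show ?thesis
    using N by simp
qed

lemma le_1_imp_le_exp_decay:
  fixes C5 c :: real
  assumes "p \<le> 1" "N \<le> N0" "0 \<le> C5" "0 \<le> c"
  shows "p \<le> exp (C5 * real N0 powr c) * exp (- C5 * real N powr c)"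
proof -
  have "C5 * real N powr c \<le> C5 * real N0 powr c"
    using assms by (intro mult_left_mono powr_mono2) auto
  then have "1 \<le> exp (C5 * real N0 powr c - C5 * real N powr c)"
    by simp
  moreover have "exp (C5 * real N0 powr c) * exp (- C5 * real N powr c) = exp (C5 * real N0 powr c - C5 * real N powr c)"
    by (simp flip: exp_add)
  ultimately show ?thesis
    using assms(1) by linarith
qed

lemma tilted_rate_exit_le_large:
  fixes \<phi> :: "real^'d \<Rightarrow> real" and r2 r5 \<alpha> m M Lp :: real
  assumes r: "0 < r2" "r2 \<le> r5" and m: "0 < m" "m \<le> M"
    and bounds: "\<And>z. z \<in> S \<Longrightarrow> m \<le> \<phi> z \<and> \<phi> z \<le> M"
    and lip: "\<And>a b. a \<in> S \<Longrightarrow> b \<in> S \<Longrightarrow> \<bar>\<phi> a - \<phi> b\<bar> \<le> Lp * dist a b"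
  obtains C4 C5 where "0 < C4" "0 < C5"
    and "\<And>N x0 x. 1 \<le> N \<Longrightarrow> 4 * Lp * real N powr r2 \<le> m * real N \<Longrightarrow>
      (\<And>y. y \<in> zbox x0 (\<lfloor>real N powr r5\<rfloor> + 1) \<Longrightarrow> (1 / real N) *\<^sub>R rvec y \<in> S) \<Longrightarrow>
      exit_after (tilted_rate \<phi> N x0 r5) x (zbox x0 \<lfloor>real N powr r2\<rfloor>) (real N powr (2 * \<alpha>))
        \<le> C4 * exp (- C5 * real N powr (2 * \<alpha> - 2 * r2))"
proof -
  obtain C4 C5 where C: "0 < C4" "0 < C5"
    and bound: "\<And>s (f :: int^'d \<Rightarrow> real) c i x. 1 \<le> s \<Longrightarrow> (\<And>y. m \<le> f y \<and> f y \<le> M) \<Longrightarrow>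
      (\<And>y. y \<in> zbox c \<lfloor>s powr r2\<rfloor> \<Longrightarrow>
         2 * real_of_int \<lfloor>s powr r2\<rfloor> * \<bar>f (y + axis i 1) - f (y - axis i 1)\<bar> \<le> m) \<Longrightarrow>
      exit_after (ratio_rate f) x (zbox c \<lfloor>s powr r2\<rfloor>) (s powr (2 * \<alpha>))
        \<le> C4 * exp (- C5 * s powr (2 * \<alpha> - 2 * r2))"
    using ratio_rate_exit_le[OF r(1) m] by blast
  show ?thesis
  proof (rule that[OF C])
    fix N x0 x
    assume N: "1 \<le> N" and small: "4 * Lp * real N powr r2 \<le> m * real N"
      and S: "\<And>y. y \<in> zbox x0 (\<lfloor>real N powr r5\<rfloor> + 1) \<Longrightarrow> (1 / real N) *\<^sub>R rvec y \<in> S"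
    let ?L = "\<lfloor>real N powr r2\<rfloor>"
    have diff: "2 * real_of_int ?L * \<bar>phi_per \<phi> N x0 r5 (y + axis i 1) - phi_per \<phi> N x0 r5 (y - axis i 1)\<bar> \<le> m"
      if y: "y \<in> zbox x0 ?L" for y i
    proof -
      have "?L \<le> \<lfloor>real N powr r5\<rfloor>"
        using N r by (intro floor_mono powr_mono) auto
      moreover have "\<bar>y $ j - x0 $ j\<bar> \<le> ?L" for j
        using y by (simp add: zbox_def)
      ultimately have "y \<in> zbox x0 \<lfloor>real N powr r5\<rfloor>"
        by (auto simp: zbox_def intro: order_trans)
      then have "\<bar>phi_per \<phi> N x0 r5 (y + axis i 1) - phi_per \<phi> N x0 r5 (y - axis i 1)\<bar> \<le> 2 * Lp / real N"
        using N by (intro phi_per_axis_diff[OF S lip]) auto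
      moreover have "0 \<le> real_of_int ?L" "real_of_int ?L \<le> real N powr r2"
        by simp_all
      ultimately have "2 * real_of_int ?L * \<bar>phi_per \<phi> N x0 r5 (y + axis i 1) - phi_per \<phi> N x0 r5 (y - axis i 1)\<bar>
          \<le> 2 * real N powr r2 * (2 * Lp / real N)"
        by (intro mult_mono) auto
      also have "\<dots> \<le> m"
        using small N by (simp add: field_simps)
      finally show ?thesis .
    qed
    show "exit_after (tilted_rate \<phi> N x0 r5) x (zbox x0 ?L) (real N powr (2 * \<alpha>))
        \<le> C4 * exp (- C5 * real N powr (2 * \<alpha> - 2 * r2))"
      unfolding tilted_rate_eq_ratio_rate using N
      by (intro bound phi_per_bounds[OF S bounds] diff) auto
  qed
qed

lemma tilted_rate_exit_le:
  fixes \<phi> :: "real^'d \<Rightarrow> real" and R \<eta> \<delta>t r2 r5 \<alpha> :: real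
  assumes \<phi>_smooth: "smooth_on_closed (cball 0 R) \<phi>" and \<phi>_pos: "\<forall>x\<in>ball 0 R. \<phi> x > 0"
    and \<eta>: "0 < \<eta>" "\<eta> < R" and r: "0 < r2" "r2 \<le> r5" "r5 < 1" "r2 \<le> \<alpha>" and \<delta>t: "0 < \<delta>t"
  obtains C4 C5 where "0 < C4" "0 < C5"
    and "\<And>N (x0 :: int^'d) x. 1 \<le> N \<Longrightarrow>
      (\<forall>y\<in>zbox x0 \<lfloor>\<delta>t * real N / 100\<rfloor>. rvec y \<in> (\<lambda>x. real N *\<^sub>R x) ` ball 0 (R - \<eta>)) \<Longrightarrow>
      exit_after (tilted_rate \<phi> N x0 r5) x (zbox x0 \<lfloor>real N powr r2\<rfloor>) (real N powr (2 * \<alpha>))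
        \<le> C4 * exp (- C5 * real N powr (2 * \<alpha> - 2 * r2))"
proof -
  define S where "S = cball (0::real^'d) (R - \<eta>)"
  have S: "compact S" "convex S" "S \<noteq> {}" "S \<subseteq> cball 0 R" "ball 0 (R - \<eta>) \<subseteq> S"
    using \<eta> by (auto simp: S_def)
  have "continuous_on S \<phi>"
    using smooth_on_closed_continuous_on[OF \<phi>_smooth] S(4) by (rule continuous_on_subset)
  moreover have "0 < \<phi> z" if "z \<in> S" for z
    using \<phi>_pos that \<eta> by (auto simp: S_def)
  ultimately obtain m M where m: "0 < m" "m \<le> M" and bounds: "\<And>z. z \<in> S \<Longrightarrow> m \<le> \<phi> z \<and> \<phi> z \<le> M"
    using continuous_on_compact_pos_bounds[OF _ S(1,3)] by blast
  obtain Lp where lip: "\<And>a b. a \<in> S \<Longrightarrow> b \<in> S \<Longrightarrow> \<bar>\<phi> a - \<phi> b\<bar> \<le> Lp * dist a b"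
    using smooth_on_closed_lipschitz[OF \<phi>_smooth S(1,2,4)] by blast
  obtain C4 C5 where C: "0 < C4" "0 < C5"
    and large_bound: "\<And>N (x0 :: int^'d) x. 1 \<le> N \<Longrightarrow> 4 * Lp * real N powr r2 \<le> m * real N \<Longrightarrow>
      (\<And>y. y \<in> zbox x0 (\<lfloor>real N powr r5\<rfloor> + 1) \<Longrightarrow> (1 / real N) *\<^sub>R rvec y \<in> S) \<Longrightarrow>
      exit_after (tilted_rate \<phi> N x0 r5) x (zbox x0 \<lfloor>real N powr r2\<rfloor>) (real N powr (2 * \<alpha>))
        \<le> C4 * exp (- C5 * real N powr (2 * \<alpha> - 2 * r2))"
    using tilted_rate_exit_le_large[OF r(1,2) m bounds lip] by blast
  have "eventually (\<lambda>N. 1 * real N powr r5 + 2 \<le> \<delta>t / 100 * real N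
                       \<and> 4 * Lp * real N powr r2 + 0 \<le> m * real N) sequentially"
    using r \<delta>t m by (intro eventually_conj eventually_powr_le_linear) simp_all
  then obtain N0 where large: "\<And>N. N0 \<le> N \<Longrightarrow>
      real N powr r5 + 2 \<le> \<delta>t / 100 * real N \<and> 4 * Lp * real N powr r2 \<le> m * real N"
    unfolding eventually_sequentially by auto
  define c6 where "c6 = 2 * \<alpha> - 2 * r2"
  show ?thesis
  proof (rule that[of "max C4 (exp (C5 * real N0 powr c6))" C5, folded c6_def])
    show "0 < max C4 (exp (C5 * real N0 powr c6))" "0 < C5"
      using C by auto
    fix N :: nat and x0 x :: "int^'d"
    assume N: "1 \<le> N"
      and box: "\<forall>y\<in>zbox x0 \<lfloor>\<delta>t * real N / 100\<rfloor>. rvec y \<in> (\<lambda>x. real N *\<^sub>R x) ` ball 0 (R - \<eta>)"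
    show "exit_after (tilted_rate \<phi> N x0 r5) x (zbox x0 \<lfloor>real N powr r2\<rfloor>) (real N powr (2 * \<alpha>))
        \<le> max C4 (exp (C5 * real N0 powr c6)) * exp (- C5 * real N powr c6)"
    proof (cases "N0 \<le> N")
      case True
      have "\<lfloor>real N powr r5\<rfloor> + 1 \<le> \<lfloor>\<delta>t * real N / 100\<rfloor>"
        using large[OF True] by linarith
      then have "(1 / real N) *\<^sub>R rvec y \<in> S" if "y \<in> zbox x0 (\<lfloor>real N powr r5\<rfloor> + 1)" for y
        using zbox_scaled_mem[OF box _ _ that] N S(5) by auto
      then have "exit_after (tilted_rate \<phi> N x0 r5) x (zbox x0 \<lfloor>real N powr r2\<rfloor>) (real N powr (2 * \<alpha>))
          \<le> C4 * exp (- C5 * real N powr c6)"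
        unfolding c6_def using N large[OF True] by (intro large_bound) auto
      also have "\<dots> \<le> max C4 (exp (C5 * real N0 powr c6)) * exp (- C5 * real N powr c6)"
        by (intro mult_right_mono) auto
      finally show ?thesis .
    next
      case False
      have "exit_after (tilted_rate \<phi> N x0 r5) x (zbox x0 \<lfloor>real N powr r2\<rfloor>) (real N powr (2 * \<alpha>))
          \<le> exp (C5 * real N0 powr c6) * exp (- C5 * real N powr c6)"
        using False C r by (intro le_1_imp_le_exp_decay) (auto simp: exit_after_def c6_def)
      also have "\<dots> \<le> max C4 (exp (C5 * real N0 powr c6)) * exp (- C5 * real N powr c6)"
        by (intro mult_right_mono) auto
      finally show ?thesis .
    qed
  qed
qed

theorem lemma4p6:
  fixes D :: "(real^'d::finite) set"
    and \<phi> :: "real^'d \<Rightarrow> real"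
    and \<delta> \<eta> \<delta>t r1 r2 r3 r4 r5 :: real
    and R :: nat
  assumes d3: "CARD('d) \<ge> 3"
    and D: "admissible_D D"
    and \<delta>: "0 < \<delta>" "\<delta> < min 1 (rD D / 2)"
    and R: "real R > 4 * rD D"
    and \<phi>_smooth: "smooth_on_closed (cball 0 (real R)) \<phi>"
    and \<phi>_supp: "closure {x. \<phi> x \<noteq> 0} = cball 0 (real R)"
    and \<phi>_pos: "\<forall>x\<in>ball 0 (real R). \<phi> x > 0"
    and \<phi>_harm: "harmonic_on (ball 0 (real R) - nbhd D \<delta>) \<phi>"
    and \<eta>: "0 < \<eta>" "\<eta> < real R / 100"
    and r: "0 < r1" "r1 < r2" "r2 < r3" "r3 < r4" "r4 < r5" "r5 < 1/4"
           "r1 * (real CARD('d) - 2) + r5 < 1"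
           "r1 < (real CARD('d) - 2) / (real CARD('d) - 1) * r2"
    and \<delta>t: "0 < \<delta>t"
  shows "\<forall>\<alpha>. r2 < \<alpha> \<and> \<alpha> < 1 \<longrightarrow>
    (\<exists>C4 C5 c6 C4' C5' c6'. C4 > 0 \<and> C5 > 0 \<and> c6 > 0 \<and> C4' > 0 \<and> C5' > 0 \<and> c6' > 0 \<and>
      (\<forall>(N::nat) (x0::int^'d). N \<ge> 1 \<longrightarrow>
         rvec x0 \<in> (\<lambda>x. real N *\<^sub>R x) ` nbhd D \<delta> \<longrightarrow>
         (\<forall>y\<in>zbox x0 \<lfloor>\<delta>t * real N / 100\<rfloor>. rvec y \<in> (\<lambda>x. real N *\<^sub>R x) ` ball 0 (real R - \<eta>)) \<longrightarrow>
         (let A1 = zbox x0 \<lfloor>real N powr r1\<rfloor>; A2 = zbox x0 \<lfloor>real N powr r2\<rfloor>; t = real N powr (2 * \<alpha>) in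
           (SUP x\<in>A1. exit_after (tilted_rate \<phi> N x0 r5) x A2 t) \<le> C4 * exp (- C5 * real N powr c6) \<and>
           (SUP x\<in>A1. exit_after srw_rate x A2 t) \<le> C4' * exp (- C5' * real N powr c6'))))"
  apply (intro allI impI)
  subgoal premises \<alpha> for \<alpha>
  proof -
    have r': "0 < r2" "r2 \<le> r5" "r5 < 1" "r2 \<le> \<alpha>" and \<eta>': "\<eta> < real R"
      using r \<alpha> \<eta> by linarith+
    obtain C4 C5 where C: "0 < C4" "0 < C5"
      and tilted: "\<And>N (x0 :: int^'d) x. 1 \<le> N \<Longrightarrow>
        (\<forall>y\<in>zbox x0 \<lfloor>\<delta>t * real N / 100\<rfloor>. rvec y \<in> (\<lambda>x. real N *\<^sub>R x) ` ball 0 (real R - \<eta>)) \<Longrightarrow>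
        exit_after (tilted_rate \<phi> N x0 r5) x (zbox x0 \<lfloor>real N powr r2\<rfloor>) (real N powr (2 * \<alpha>))
          \<le> C4 * exp (- C5 * real N powr (2 * \<alpha> - 2 * r2))"
      using tilted_rate_exit_le[OF \<phi>_smooth \<phi>_pos \<eta>(1) \<eta>' r' \<delta>t] by blast
    obtain C4' C5' where C': "0 < C4'" "0 < C5'"
      and srw: "\<And>N (x0 :: int^'d) x. 1 \<le> N \<Longrightarrow>
        exit_after srw_rate x (zbox x0 \<lfloor>real N powr r2\<rfloor>) (real N powr (2 * \<alpha>))
          \<le> C4' * exp (- C5' * real N powr (2 * \<alpha> - 2 * r2))"
      using srw_rate_exit_le[OF r'(1)] by blast
    have A1: "zbox x0 \<lfloor>real N powr r1\<rfloor> \<noteq> {}" for x0 :: "int^'d" and N :: nat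
      by (auto simp: zbox_def intro!: exI[of _ x0])
    show ?thesis
    proof (intro exI conjI allI impI)
      show "0 < C4" "0 < C5" "0 < 2 * \<alpha> - 2 * r2" "0 < C4'" "0 < C5'" "0 < 2 * \<alpha> - 2 * r2"
        using C C' \<alpha> by auto
    qed (unfold Let_def, intro conjI cSUP_least A1 tilted srw, simp_all)
  qed
  done

end
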